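(* There is a constant $c>0$ such that the following holds. Let $f:\mathbb{N}\to\mathbb{R}_{\ge 0}$ and suppose a comparison-based predecessor search algorithm on a sorted array $A$ of size $n$ has the property that, for every sequence of predecessor searches $x_1,\dots,x_m$ and every $y\in A$, the amortized number of comparisons involving $y$ caused by search $x_i$ is at most $f(d(x_i,y))$ (i.e., the total number of comparisons involving $y$ over the sequence is, up to an additive term independent of $m$, at most $\sum_{i=1}^m f(d(x_i,y))$). Then $\sum_{k=1}^{p} f(k)\ge c\log p$ for all $p\le n$.
   Context: A predecessor search with query $x$ in a sorted array $A=A[0],\dots,A[n-1]$ returns the index of the largest element of $A$ smaller than $x$. For a query $x$ and $y\in A$, $d(x,y)$ denotes the number of elements of $A$ between $x$ and $y$ in $A$, inclusive. An element participates in a comparison if it is one of the two elements compared. *)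

theory Defs
  imports Complex_Main
begin

text \<open>Model of a deterministic comparison-based predecessor search algorithm on a
sorted array A (a real list).
The decision tree used for the current search may depend arbitrarily on the
history (answers and comparison transcripts) of all previous searches, which
models self-adjusting / amortized data structures.\<close>

datatype cmp = LT | EQ | GT

datatype dtree = Ans "nat option" | Cmp nat dtree dtree dtree

fun run :: "real list \<Rightarrow> dtree \<Rightarrow> real \<Rightarrow> nat option \<times> (nat \<times> cmp) list" where
  "run A (Ans r) x = (r, [])"
| "run A (Cmp j l e g) x =
     (if x < A ! j then (case run A l x of (r, t) \<Rightarrow> (r, (j, LT) # t))
      else if x = A ! j then (case run A e x of (r, t) \<Rightarrow> (r, (j, EQ) # t))
      else (case run A g x of (r, t) \<Rightarrow> (r, (j, GT) # t)))"

type_synonym history = "(nat option \<times> (nat \<times> cmp) list) list"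
type_synonym algorithm = "history \<Rightarrow> dtree"

fun exec :: "algorithm \<Rightarrow> real list \<Rightarrow> history \<Rightarrow> real list \<Rightarrow> history" where
  "exec alg A h [] = h"
| "exec alg A h (x # xs) = exec alg A (h @ [run A (alg h) x]) xs"

definition searches :: "algorithm \<Rightarrow> real list \<Rightarrow> real list \<Rightarrow> history" where
  "searches alg A xs = exec alg A [] xs"

definition pred_idx :: "real list \<Rightarrow> real \<Rightarrow> nat option" where
  "pred_idx A x = (if \<exists>i<length A. A ! i < x
                   then Some (GREATEST i. i < length A \<and> A ! i < x) else None)"

definition valid_pred_alg :: "algorithm \<Rightarrow> real list \<Rightarrow> bool" where
  "valid_pred_alg alg A \<longleftrightarrow>
     (\<forall>xs. \<forall>i<length xs.
        fst (searches alg A xs ! i) = pred_idx A (xs ! i) \<and>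
        (\<forall>jc\<in>set (snd (searches alg A xs ! i)). fst jc < length A))"

definition comps_with :: "algorithm \<Rightarrow> real list \<Rightarrow> real list \<Rightarrow> nat \<Rightarrow> nat" where
  "comps_with alg A xs k =
     (\<Sum>s\<leftarrow>searches alg A xs. length (filter (\<lambda>jc. fst jc = k) (snd s)))"

definition arr_dist :: "real list \<Rightarrow> real \<Rightarrow> nat \<Rightarrow> nat" where
  "arr_dist A x k = card {i. i < length A \<and> min x (A ! k) \<le> A ! i \<and> A ! i \<le> max x (A ! k)}"

end

theory Submission
  imports Defs
begin

text \<open>Adversary argument. Whatever the history, the next decision tree must give the queries
  A!0, ..., A!(p-1) pairwise distinct answers, so one of them costs at least log_3 p
  comparisons with A!0, ..., A!(p-1). Asking m such queries in a row therefore forces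
  m log_3 p comparisons with these p elements, while the hypothesis bounds their number by
  p C + 2 m (f 1 + ... + f p), because a query A!j with j < p is at distance d from at most
  two of them. Letting m grow gives log_3 p \<le> 2 (f 1 + ... + f p).\<close>

lemma sorted_wrt_less_nth_less_iff:
  fixes A :: "'a::linorder list"
  assumes "sorted_wrt (<) A" "i < length A" "j < length A"
  shows "A ! i < A ! j \<longleftrightarrow> i < j"
  using assms sorted_wrt_nth_less[OF assms(1)]
  by (metis less_asym linorder_neqE_nat)

lemma sorted_wrt_less_nth_le_iff:
  fixes A :: "'a::linorder list"
  assumes "sorted_wrt (<) A" "i < length A" "j < length A"
  shows "A ! i \<le> A ! j \<longleftrightarrow> i \<le> j"
  using sorted_wrt_less_nth_less_iff[OF assms(1) assms(3,2)] by (simp add: not_less[symmetric])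

lemma pred_idx_nth:
  assumes "sorted_wrt (<) A" "i < length A"
  shows "pred_idx A (A ! i) = (if i = 0 then None else Some (i - 1))"
proof -
  note less_iff = sorted_wrt_less_nth_less_iff[OF assms(1) _ assms(2)]
  have "(\<exists>j<length A. A ! j < A ! i) \<longleftrightarrow> 0 < i"
    using less_iff assms(2) by (metis gr_zeroI less_nat_zero_code order.strict_trans)
  moreover have "(GREATEST j. j < length A \<and> A ! j < A ! i) = i - 1" if "0 < i"
    by (rule Greatest_equality) (use less_iff that assms(2) in auto)
  ultimately show ?thesis
    unfolding pred_idx_def by auto
qed

lemma arr_dist_nth:
  assumes "sorted_wrt (<) A" "j < length A" "k < length A"
  shows "arr_dist A (A ! j) k = (if j \<le> k then k - j + 1 else j - k + 1)"
proof -
  note le_iff = sorted_wrt_less_nth_le_iff[OF assms(1)]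
  have "{i. i < length A \<and> A ! a \<le> A ! i \<and> A ! i \<le> A ! b} = {a..b}"
    if "a < length A" "b < length A" for a b
    using le_iff that by auto
  then show ?thesis
    unfolding arr_dist_def using le_iff[OF assms(2,3)] le_iff[OF assms(3,2)] assms(2,3)
    by (cases "j \<le> k") (simp_all add: min_def max_def)
qed

lemma sum_arr_dist_nth_le:
  fixes f :: "nat \<Rightarrow> real"
  assumes "sorted_wrt (<) A" "p \<le> length A" "j < p" "\<forall>k. f k \<ge> 0"
  shows "(\<Sum>k<p. f (arr_dist A (A ! j) k)) \<le> 2 * (\<Sum>k=1..p. f k)"
proof -
  have dist: "arr_dist A (A ! j) k = (if j \<le> k then k - j + 1 else j - k + 1)" if "k < p" for k
    using arr_dist_nth[OF assms(1)] assms(2,3) that by simp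
  have "(\<Sum>k<p. f (arr_dist A (A ! j) k))
      = (\<Sum>k<j. f (j - k + 1)) + (\<Sum>k\<in>{j..<p}. f (k - j + 1))"
  proof -
    have "(\<Sum>k<p. f (arr_dist A (A ! j) k))
        = (\<Sum>k<j. f (arr_dist A (A ! j) k)) + (\<Sum>k\<in>{j..<p}. f (arr_dist A (A ! j) k))"
      using sum.atLeastLessThan_concat[of 0 j p, symmetric] assms(3) by (simp add: atLeast0LessThan)
    then show ?thesis
      using dist assms(3) by simp
  qed
  also have "(\<Sum>k<j. f (j - k + 1)) = sum f ((\<lambda>k. j - k + 1) ` {..<j})"
    by (subst sum.reindex) (auto simp: inj_on_def)
  also have "\<dots> \<le> (\<Sum>k=1..p. f k)"
    by (rule sum_mono2) (use assms(3,4) in auto)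
  also have "(\<Sum>k\<in>{j..<p}. f (k - j + 1)) = sum f ((\<lambda>k. k - j + 1) ` {j..<p})"
    by (subst sum.reindex) (auto simp: inj_on_def)
  also have "\<dots> \<le> (\<Sum>k=1..p. f k)"
    by (rule sum_mono2) (use assms(3,4) in auto)
  finally show ?thesis by simp
qed

lemma pigeonhole_fibre:
  assumes "finite I" "I \<noteq> {}" "finite B" "g ` I \<subseteq> B"
  shows "\<exists>c\<in>B. card I \<le> card B * card {i\<in>I. g i = c}"
proof (rule ccontr)
  assume "\<not> ?thesis"
  then have small: "card B * card {i\<in>I. g i = c} < card I" if "c \<in> B" for c
    using that by auto
  have "I = (\<Union>c\<in>B. {i\<in>I. g i = c})" using assms(4) by auto
  then have "card I = (\<Sum>c\<in>B. card {i\<in>I. g i = c})"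
    using card_UN_disjoint[of B "\<lambda>c. {i\<in>I. g i = c}"] assms(1,3) by auto
  then have "card B * card I = (\<Sum>c\<in>B. card B * card {i\<in>I. g i = c})"
    by (simp add: sum_distrib_left)
  also have "\<dots> < (\<Sum>c\<in>B. card I)"
    using assms(2,3,4) small by (intro sum_strict_mono) auto
  finally show False by simp
qed

definition compare :: "real \<Rightarrow> real \<Rightarrow> cmp" where
  "compare x y = (if x < y then LT else if x = y then EQ else GT)"

fun child :: "cmp \<Rightarrow> dtree \<Rightarrow> dtree \<Rightarrow> dtree \<Rightarrow> dtree" where
  "child LT l e g = l"
| "child EQ l e g = e"
| "child GT l e g = g"

lemma run_Cmp:
  "run A (Cmp j l e g) x =
     (fst (run A (child (compare x (A ! j)) l e g) x),
      (j, compare x (A ! j)) # snd (run A (child (compare x (A ! j)) l e g) x))"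
  by (simp add: compare_def split: prod.split)

declare run.simps(2) [simp del] run_Cmp [simp]

definition cmps_below :: "nat \<Rightarrow> (nat \<times> cmp) list \<Rightarrow> nat" where
  "cmps_below p t = length (filter (\<lambda>jc. fst jc < p) t)"

lemma sum_length_filter_fst_eq_cmps_below:
  "(\<Sum>k<p. length (filter (\<lambda>jc. fst jc = k) t)) = cmps_below p t"
proof (induction t)
  case (Cons a t)
  have "(\<Sum>k<p. length (filter (\<lambda>jc. fst jc = k) (a # t)))
      = (\<Sum>k<p. of_bool (fst a = k)) + (\<Sum>k<p. length (filter (\<lambda>jc. fst jc = k) t))"
    by (simp only: sum.distrib[symmetric]) (rule sum.cong, auto)
  then show ?case
    using Cons.IH by (simp add: cmps_below_def)
qed (simp add: cmps_below_def)

lemma cmps_below_Cons [simp]: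
  "cmps_below p ((j, c) # t) = (if j < p then Suc (cmps_below p t) else cmps_below p t)"
  by (simp add: cmps_below_def)

lemma compare_nth_eq_LT:
  assumes "sorted_wrt (<) A" "i < j" "j < length A"
  shows "compare (A ! i) (A ! j) = LT"
  using sorted_wrt_nth_less[OF assms] by (simp add: compare_def)

lemma inj_on_run_child:
  assumes "inj_on (\<lambda>i. fst (run A (Cmp j l e g) (A ! i))) I"
  shows "inj_on (\<lambda>i. fst (run A (child c l e g) (A ! i))) {i\<in>I. compare (A ! i) (A ! j) = c}"
  using inj_on_subset[OF assms, of "{i\<in>I. compare (A ! i) (A ! j) = c}"]
  by (auto simp: inj_on_def)

lemma child_in_subtrees: "child c l e g \<in> {l, e, g}"
  by (cases c) simp_all

lemma card_le_pow_cmps_below_Cmp: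
  assumes "i \<in> {i\<in>I. compare (A ! i) (A ! j) = c}"
    and "card {i\<in>I. compare (A ! i) (A ! j) = c}
      \<le> 3 ^ cmps_below p (snd (run A (child c l e g) (A ! i)))"
    and "card I \<le> (if p \<le> j then 1 else 3) * card {i\<in>I. compare (A ! i) (A ! j) = c}"
  shows "card I \<le> 3 ^ cmps_below p (snd (run A (Cmp j l e g) (A ! i)))"
  using assms by auto

text \<open>Comparisons with positions j \<ge> p need not be counted: they send every query A!i
  with i < p to the same subtree.\<close>

lemma card_le_pow_cmps_below:
  assumes sorted: "sorted_wrt (<) A" and "p \<le> length A"
    and "I \<subseteq> {..<p}" "I \<noteq> {}"
    and "inj_on (\<lambda>i. fst (run A T (A ! i))) I"
    and "\<forall>i\<in>I. \<forall>jc\<in>set (snd (run A T (A ! i))). fst jc < length A"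
  shows "\<exists>i\<in>I. card I \<le> 3 ^ cmps_below p (snd (run A T (A ! i)))"
  using assms(3-)
proof (induction T arbitrary: I)
  case (Ans r)
  have "finite I"
    using Ans.prems(1) finite_subset by blast
  moreover have "\<forall>a\<in>I. \<forall>b\<in>I. a = b"
    using Ans.prems(3) by (simp add: inj_on_def)
  ultimately have "card I \<le> 1"
    by (simp add: card_le_Suc0_iff_eq)
  with Ans.prems(2) show ?case
    by (auto simp: cmps_below_def)
next
  case (Cmp j l e g)
  let ?I = "\<lambda>c. {i\<in>I. compare (A ! i) (A ! j) = c}"
  have fin: "finite I"
    using Cmp.prems(1) finite_subset by blast
  obtain i0 where "i0 \<in> I"
    using Cmp.prems(2) by blast
  with Cmp.prems(4) have j: "j < length A"
    by simp
  have IH: "\<exists>i\<in>I'. card I' \<le> 3 ^ cmps_below p (snd (run A T' (A ! i)))"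
    if "T' \<in> {l, e, g}" "I' \<subseteq> {..<p}" "I' \<noteq> {}"
      "inj_on (\<lambda>i. fst (run A T' (A ! i))) I'"
      "\<forall>i\<in>I'. \<forall>jc\<in>set (snd (run A T' (A ! i))). fst jc < length A"
    for T' I'
    using Cmp.IH that by blast
  have descend: "\<exists>i\<in>I. card I \<le> 3 ^ cmps_below p (snd (run A (Cmp j l e g) (A ! i)))"
    if c: "card I \<le> (if p \<le> j then 1 else 3) * card (?I c)" for c
  proof -
    note child_in_subtrees
    moreover have "?I c \<subseteq> {..<p}"
      using Cmp.prems(1) by auto
    moreover have "?I c \<noteq> {}"
    proof
      assume "?I c = {}"
      with c have "card I = 0" by simp
      with fin Cmp.prems(2) show False by simp
    qed
    moreover note inj_on_run_child[OF Cmp.prems(3), of c]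
    moreover have "\<forall>i\<in>?I c. \<forall>jc\<in>set (snd (run A (child c l e g) (A ! i))). fst jc < length A"
      using Cmp.prems(4) by auto
    ultimately have "\<exists>i\<in>?I c. card (?I c) \<le> 3 ^ cmps_below p (snd (run A (child c l e g) (A ! i)))"
      by (rule IH)
    with card_le_pow_cmps_below_Cmp[OF _ _ c] show ?thesis
      by blast
  qed
  show ?case
  proof (cases "p \<le> j")
    case True
    then have "?I LT = I"
      using Cmp.prems(1) compare_nth_eq_LT[OF sorted _ j] by fastforce
    with descend[of LT] True show ?thesis by simp
  next
    case False
    have "finite {LT, EQ, GT}" "(\<lambda>i. compare (A ! i) (A ! j)) ` I \<subseteq> {LT, EQ, GT}"
      using cmp.exhaust by auto
    from pigeonhole_fibre[OF fin Cmp.prems(2) this]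
    obtain c where "card I \<le> card {LT, EQ, GT} * card (?I c)"
      by blast
    with descend[of c] False show ?thesis by simp
  qed
qed

lemma length_searches: "length (searches alg A xs) = length xs"
proof -
  have "length (exec alg A h xs) = length h + length xs" for h
    by (induction xs arbitrary: h) simp_all
  then show ?thesis
    by (simp add: searches_def)
qed

lemma searches_snoc:
  "searches alg A (xs @ [x]) = searches alg A xs @ [run A (alg (searches alg A xs)) x]"
proof -
  have "exec alg A h (xs @ [x]) = exec alg A h xs @ [run A (alg (exec alg A h xs)) x]" for h
    by (induction xs arbitrary: h) simp_all
  then show ?thesis
    by (simp add: searches_def)
qed

lemma comps_with_snoc:
  "comps_with alg A (xs @ [x]) k = comps_with alg A xs k
     + length (filter (\<lambda>jc. fst jc = k) (snd (run A (alg (searches alg A xs)) x)))"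
  by (simp add: comps_with_def searches_snoc)

lemma valid_pred_alg_next_search:
  assumes "valid_pred_alg alg A"
  shows "fst (run A (alg (searches alg A xs)) x) = pred_idx A x"
    and "\<forall>jc\<in>set (snd (run A (alg (searches alg A xs)) x)). fst jc < length A"
proof -
  have "searches alg A (xs @ [x]) ! length xs = run A (alg (searches alg A xs)) x"
    by (simp add: searches_snoc nth_append length_searches)
  with assms[unfolded valid_pred_alg_def, rule_format, of "length xs" "xs @ [x]"]
  show "fst (run A (alg (searches alg A xs)) x) = pred_idx A x"
    and "\<forall>jc\<in>set (snd (run A (alg (searches alg A xs)) x)). fst jc < length A"
    by simp_all
qed

lemma exists_costly_search:
  assumes "sorted_wrt (<) A" "valid_pred_alg alg A" "1 \<le> p" "p \<le> length A"
  shows "\<exists>i<p. p \<le> 3 ^ cmps_below p (snd (run A (alg (searches alg A xs)) (A ! i)))"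
proof -
  let ?run = "\<lambda>i. run A (alg (searches alg A xs)) (A ! i)"
  have "inj_on (\<lambda>i. fst (?run i)) {..<p}"
  proof (rule inj_onI)
    fix a b assume "a \<in> {..<p}" "b \<in> {..<p}" "fst (?run a) = fst (?run b)"
    with assms show "a = b"
      by (auto simp: valid_pred_alg_next_search(1) pred_idx_nth split: if_splits)
  qed
  then have "\<exists>i\<in>{..<p}. card {..<p} \<le> 3 ^ cmps_below p (snd (?run i))"
    using assms by (intro card_le_pow_cmps_below)
      (auto simp: valid_pred_alg_next_search(2) lessThan_empty_iff)
  then show ?thesis
    by auto
qed

lemma log2_le_of_le_pow3:
  assumes "1 \<le> p" "real p \<le> 3 ^ n"
  shows "log 2 (real p) \<le> 2 * real n"
proof -
  have "real p \<le> 4 ^ n"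
    using assms(2) power_mono[of "3::real" 4 n] by linarith
  also have "(4::real) ^ n = 2 powr (2 * real n)"
    by (metis mult.commute numeral_Bit0_eq_double numeral_powr_numeral_real
        power2_eq_square powr_power zero_neq_numeral)
  finally show ?thesis
    using assms(1) by (simp add: log_le_iff)
qed

lemma adversary_sequence:
  assumes "sorted_wrt (<) A" "valid_pred_alg alg A" "1 \<le> p" "p \<le> length A"
  shows "\<exists>xs. length xs = m \<and> set xs \<subseteq> (!) A ` {..<p} \<and>
    real m * log 2 (real p) \<le> 2 * (\<Sum>k<p. real (comps_with alg A xs k))"
proof (induction m)
  case 0
  show ?case
    by (auto intro: exI[of _ "[]"] sum_nonneg)
next
  case (Suc m)
  then obtain xs where xs: "length xs = m" "set xs \<subseteq> (!) A ` {..<p}"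
    "real m * log 2 (real p) \<le> 2 * (\<Sum>k<p. real (comps_with alg A xs k))"
    by blast
  let ?t = "\<lambda>i. snd (run A (alg (searches alg A xs)) (A ! i))"
  obtain i where i: "i < p" "p \<le> 3 ^ cmps_below p (?t i)"
    using exists_costly_search[OF assms] by blast
  have "log 2 (real p) \<le> 2 * real (cmps_below p (?t i))"
    using log2_le_of_le_pow3[OF assms(3)] i(2) by (metis of_nat_le_iff of_nat_numeral of_nat_power)
  moreover have "(\<Sum>k<p. real (comps_with alg A (xs @ [A ! i]) k))
      = (\<Sum>k<p. real (comps_with alg A xs k)) + real (cmps_below p (?t i))"
    by (simp add: comps_with_snoc sum.distrib sum_length_filter_fst_eq_cmps_below[symmetric])
  ultimately show ?case
    using xs i(1) by (intro exI[of _ "xs @ [A ! i]"]) (auto simp: algebra_simps)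
qed

lemma le_if_forall_nat_mult_le:
  fixes a b c :: real
  assumes "\<And>m::nat. real m * a \<le> b + real m * c"
  shows "a \<le> c"
proof (rule ccontr)
  assume "\<not> a \<le> c"
  then have "a - c > 0" by simp
  obtain m :: nat where "b / (a - c) < real m"
    using reals_Archimedean2 by blast
  with \<open>a - c > 0\<close> have "b < real m * (a - c)"
    by (simp add: field_simps)
  with assms[of m] show False
    by (simp add: algebra_simps)
qed

lemma log_le_four_sum:
  fixes f :: "nat \<Rightarrow> real"
  assumes "\<forall>k. f k \<ge> 0" "sorted_wrt (<) A" "valid_pred_alg alg A"
    and "\<forall>xs. \<forall>k<length A.
      real (comps_with alg A xs k) \<le> C + (\<Sum>i<length xs. f (arr_dist A (xs ! i) k))"
    and "1 \<le> p" "p \<le> length A"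
  shows "log 2 (real p) \<le> 4 * (\<Sum>k=1..p. f k)"
proof (rule le_if_forall_nat_mult_le)
  fix m :: nat
  let ?S = "\<Sum>k=1..p. f k"
  obtain xs where xs: "length xs = m" "set xs \<subseteq> (!) A ` {..<p}"
    and cost: "real m * log 2 (real p) \<le> 2 * (\<Sum>k<p. real (comps_with alg A xs k))"
    using adversary_sequence[OF assms(2,3,5,6)] by blast
  have "(\<Sum>k<p. real (comps_with alg A xs k))
      \<le> (\<Sum>k<p. C + (\<Sum>i<m. f (arr_dist A (xs ! i) k)))"
    using assms(4,6) xs(1) by (intro sum_mono) auto
  also have "\<dots> = real p * C + (\<Sum>i<m. \<Sum>k<p. f (arr_dist A (xs ! i) k))"
    by (simp add: sum.distrib sum.swap[of _ "{..<p}"])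
  also have "(\<Sum>i<m. \<Sum>k<p. f (arr_dist A (xs ! i) k)) \<le> (\<Sum>i<m. 2 * ?S)"
  proof (rule sum_mono)
    fix i assume "i \<in> {..<m}"
    with xs have "xs ! i \<in> (!) A ` {..<p}"
      using nth_mem by blast
    then obtain j where "j < p" "xs ! i = A ! j"
      by blast
    then show "(\<Sum>k<p. f (arr_dist A (xs ! i) k)) \<le> 2 * ?S"
      using sum_arr_dist_nth_le[OF assms(2,6) _ assms(1)] by simp
  qed
  finally show "real m * log 2 (real p) \<le> 2 * real p * C + real m * (4 * ?S)"
    using cost by simp
qed

theorem theorem3:
  shows "\<exists>c::real. c > 0 \<and>
    (\<forall>(f::nat \<Rightarrow> real) (A::real list) (alg::algorithm).
      (\<forall>k. f k \<ge> 0) \<and> sorted_wrt (<) A \<and> valid_pred_alg alg A \<and>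
      (\<exists>C::real. \<forall>xs. \<forall>k<length A.
          real (comps_with alg A xs k) \<le> C + (\<Sum>i<length xs. f (arr_dist A (xs ! i) k)))
      \<longrightarrow> (\<forall>p. 1 \<le> p \<and> p \<le> length A \<longrightarrow> (\<Sum>k=1..p. f k) \<ge> c * log 2 (real p)))"
proof (intro exI[of _ "1/4"] conjI allI impI)
  fix f :: "nat \<Rightarrow> real" and A alg p
  assume "(\<forall>k. f k \<ge> 0) \<and> sorted_wrt (<) A \<and> valid_pred_alg alg A \<and>
      (\<exists>C::real. \<forall>xs. \<forall>k<length A.
          real (comps_with alg A xs k) \<le> C + (\<Sum>i<length xs. f (arr_dist A (xs ! i) k)))"
    and "1 \<le> p \<and> p \<le> length A"
  then show "(\<Sum>k=1..p. f k) \<ge> 1/4 * log 2 (real p)"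
    using log_le_four_sum[of f A alg] by fastforce
qed simp

end
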